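(* Let $I,J\ge 2$ and let $m_A=(m_{A,1},\dots,m_{A,I})$, $m_B=(m_{B,1},\dots,m_{B,J})$ be vectors of positive integers with $\sum_i m_{A,i}=\sum_j m_{B,j}=I+J-1$. Then the number of saturated fractions $\mathcal F\subseteq[I]\times[J]$ with margins $m_A$ and $m_B$ is $$\binom{I-1}{m_{B,1}-1,\ \dots,\ m_{B,J}-1}\binom{J-1}{m_{A,1}-1,\ \dots,\ m_{A,I}-1},$$ where $\binom{n}{k_1,\dots,k_r}=\frac{n!}{k_1!\cdots k_r!}$ denotes the multinomial coefficient.
   Context: For a fraction $\mathcal F\subseteq[I]\times[J]$, its margins are $m_{A,i}=\#\{(d_1,d_2)\in\mathcal F: d_1=i\}$ and $m_{B,j}=\#\{(d_1,d_2)\in\mathcal F: d_2=j\}$. For $(i,j)\in[I]\times[J]$ let $r_{(i,j)}\in\mathbb R^{I+J-1}$ be the row vector $(1,a_1,\dots,a_{I-1},b_1,\dots,b_{J-1})$ with $a_s=1$ iff $s=i$ and $b_t=1$ iff $t=j$ (all other entries $0$); $X_{\mathcal F}$ is the matrix with rows $r_{(i,j)}$, $(i,j)\in\mathcal F$. $\mathcal F$ is saturated if $\#\mathcal F=I+J-1$ and $X_{\mathcal F}$ is non-singular. *)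

theory Defs
  imports "Jordan_Normal_Form.Determinant" "HOL-Library.Product_Lexorder"
begin

text \<open>Row vector r_(i,j) in R^(I+J-1), columns indexed 0..I+J-2:
  column 0 is the constant 1, column s (1 <= s <= I-1) is a_s = [s = i],
  column I-1+t (1 <= t <= J-1) is b_t = [t = j].\<close>
definition design_row :: "nat \<Rightarrow> nat \<Rightarrow> nat \<times> nat \<Rightarrow> nat \<Rightarrow> real" where
  "design_row I J d c =
     (if c = 0 then 1
      else if c \<le> I - 1 then (if c = fst d then 1 else 0)
      else if c \<le> I + J - 2 then (if c - (I - 1) = snd d then 1 else 0)
      else 0)"

text \<open>X_F: rows r_(i,j), (i,j) in F, listed in increasing order (row order is
  irrelevant for non-singularity).\<close>
definition design_matrix :: "nat \<Rightarrow> nat \<Rightarrow> (nat \<times> nat) set \<Rightarrow> real mat" where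
  "design_matrix I J F =
     mat (card F) (I + J - 1) (\<lambda>(k, c). design_row I J (sorted_list_of_set F ! k) c)"

definition saturated :: "nat \<Rightarrow> nat \<Rightarrow> (nat \<times> nat) set \<Rightarrow> bool" where
  "saturated I J F \<longleftrightarrow> card F = I + J - 1 \<and> det (design_matrix I J F) \<noteq> 0"

definition margin_A :: "(nat \<times> nat) set \<Rightarrow> nat \<Rightarrow> nat" where
  "margin_A F i = card {d \<in> F. fst d = i}"

definition margin_B :: "(nat \<times> nat) set \<Rightarrow> nat \<Rightarrow> nat" where
  "margin_B F j = card {d \<in> F. snd d = j}"

definition multinomial :: "nat \<Rightarrow> (nat \<Rightarrow> nat) \<Rightarrow> nat set \<Rightarrow> nat" where
  "multinomial n k K = fact n div (\<Prod>x\<in>K. fact (k x))"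

end

theory Submission
  imports Defs
begin

text \<open>Over the reals, \<open>X\<^sub>F\<close> is non-singular exactly when the only weighting of the cells of
  \<open>F\<close> whose row and column sums all vanish is the zero weighting, i.e. when \<open>F\<close>, read as a
  bipartite graph between rows and columns, is a forest. With \<open>I + J - 1\<close> cells the saturated
  fractions are therefore the spanning trees of \<open>K\<^sub>I\<^sub>,\<^sub>J\<close>, and the margins are the vertex
  degrees. As the degrees add up to \<open>2(I + J - 1)\<close>, some vertex, say column \<open>j\<close>, has degree
  one; deleting it together with its cell \<open>(i, j)\<close> leaves a spanning tree on one column fewer in
  which row \<open>i\<close> has lost one degree. Summing over \<open>i\<close> gives a recursion for the count, which is
  also satisfied by
  \<open>(I - 1)! (J - 1)! / (\<Prod>\<^sub>i (m\<^sub>A\<^sub>,\<^sub>i - 1)! \<Prod>\<^sub>j (m\<^sub>B\<^sub>,\<^sub>j - 1)!)\<close>, since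
  \<open>\<Sum>\<^sub>i (m\<^sub>A\<^sub>,\<^sub>i - 1) = J - 1\<close>.\<close>

lemma Collect_mem_insert:
  "{d \<in> insert x F. P d} = (if P x then insert x {d \<in> F. P d} else {d \<in> F. P d})"
  by auto

lemma filter_image_swap: "{d \<in> prod.swap ` F. P d} = prod.swap ` {d \<in> F. P (prod.swap d)}"
  by auto

lemma fiber_sum_eq_0_if_all_but_one:
  fixes c :: "'a \<Rightarrow> 'b::comm_monoid_add"
  assumes fin: "finite F" "finite K" and img: "f ` F \<subseteq> K" and total: "(\<Sum>d\<in>F. c d) = 0"
    and others: "\<And>k. k \<in> K \<Longrightarrow> k \<noteq> l \<Longrightarrow> (\<Sum>d\<in>{d\<in>F. f d = k}. c d) = 0"
  shows "(\<Sum>d\<in>{d\<in>F. f d = k}. c d) = 0"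
proof -
  consider "k \<notin> K" | "k \<in> K" "k \<noteq> l" | "k = l" "l \<in> K" by blast
  then show ?thesis
  proof cases
    case 1
    then have "{d\<in>F. f d = k} = {}" using img by auto
    then show ?thesis by (simp only: sum.empty)
  next
    case 2
    then show ?thesis by (rule others)
  next
    case 3
    have "(\<Sum>d\<in>F. c d) = (\<Sum>k\<in>K. \<Sum>d\<in>{d\<in>F. f d = k}. c d)"
      by (rule sum.group[OF fin img, symmetric])
    also have "\<dots> = (\<Sum>d\<in>{d\<in>F. f d = l}. c d) + (\<Sum>k\<in>K - {l}. \<Sum>d\<in>{d\<in>F. f d = k}. c d)"
      using 3 fin by (intro sum.remove) auto
    also have "(\<Sum>k\<in>K - {l}. \<Sum>d\<in>{d\<in>F. f d = k}. c d) = 0"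
      using others by simp
    finally show ?thesis using 3 total by simp
  qed
qed

lemma sum_sorted_list_of_set_nth:
  assumes "finite F"
  shows "(\<Sum>k<card F. g (sorted_list_of_set F ! k)) = sum g F"
  using sum.reindex_bij_betw[OF bij_betw_nth[of "sorted_list_of_set F" "{..<card F}" F]] assms by simp

lemma sum_minus_one_eq:
  fixes m :: "'a \<Rightarrow> nat"
  assumes "\<forall>x\<in>A. 0 < m x"
  shows "(\<Sum>x\<in>A. m x - 1) = sum m A - card A"
  using assms by (subst sum_subtractf_nat) auto

lemma sum_update_pred:
  fixes m :: "'a \<Rightarrow> nat"
  assumes "finite A" "i \<in> A" "0 < m i"
  shows "sum (m(i := m i - 1)) A = sum m A - 1"
proof -
  have "sum (m(i := m i - 1)) A = (m i - 1) + sum m (A - {i})"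
    using assms by (simp add: sum.remove)
  also have "\<dots> = sum m A - 1" using assms by (simp add: sum.remove)
  finally show ?thesis .
qed

lemma prod_fact_update_pred:
  fixes m :: "'a \<Rightarrow> nat"
  assumes "finite A" "i \<in> A" "2 \<le> m i"
  shows "(\<Prod>x\<in>A. fact (m x - 1) :: nat) = (m i - 1) * (\<Prod>x\<in>A. fact ((m(i := m i - 1)) x - 1))"
proof -
  have "fact (m i - 1) = (m i - 1) * (fact (m i - 1 - 1) :: nat)"
    using assms(3) by (simp add: fact_reduce)
  then show ?thesis using assms by (simp add: prod.remove)
qed

lemma prod_fact_dvd_fact_sum:
  fixes k :: "'a \<Rightarrow> nat"
  assumes "finite K"
  shows "(\<Prod>x\<in>K. fact (k x) :: nat) dvd fact (sum k K)"
  using assms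
proof (induction K rule: finite_induct)
  case (insert x K)
  have "fact (k x) * (\<Prod>x\<in>K. fact (k x)) dvd (fact (k x) * fact (sum k K) :: nat)"
    using insert.IH by (rule mult_dvd_mono[OF dvd_refl])
  also have "\<dots> dvd fact (k x + sum k K)" by (rule fact_fact_dvd_fact)
  finally show ?case using insert.hyps by simp
qed simp

lemma multinomial_mult_prod_fact:
  assumes "finite K" "sum k K = n"
  shows "multinomial n k K * (\<Prod>x\<in>K. fact (k x)) = fact n"
  using prod_fact_dvd_fact_sum[OF assms(1), of k] assms(2) by (simp add: multinomial_def)

lemma homogeneous_system_nontrivial_solution:
  fixes M :: "'e \<Rightarrow> 'x \<Rightarrow> 'a::field"
  assumes "finite E" "finite X" "card E < card X"
  shows "\<exists>c. (\<exists>x\<in>X. c x \<noteq> 0) \<and> (\<forall>e\<in>E. (\<Sum>x\<in>X. M e x * c x) = 0)"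
  using assms
proof (induction E arbitrary: X M rule: finite_induct)
  case empty
  then obtain x where "x \<in> X" by fastforce
  then show ?case by (intro exI[of _ "\<lambda>_. 1"]) auto
next
  case (insert e E)
  show ?case
  proof (cases "\<forall>x\<in>X. M e x = 0")
    case True
    with insert show ?thesis by auto
  next
    case False
    then obtain x0 where x0: "x0 \<in> X" "M e x0 \<noteq> 0" by auto
    \<comment> \<open>Gaussian elimination of the unknown \<open>x0\<close> by means of the equation \<open>e\<close>.\<close>
    define M' where "M' = (\<lambda>e' x. M e' x - M e' x0 * M e x / M e x0)"
    have "card E < card (X - {x0})" using x0 insert by simp
    with insert.IH[of "X - {x0}" M'] insert.prems obtain c' where
      c': "\<exists>x\<in>X - {x0}. c' x \<noteq> 0" "\<forall>e'\<in>E. (\<Sum>x\<in>X - {x0}. M' e' x * c' x) = 0" by auto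
    define s where "s = (\<Sum>x\<in>X - {x0}. M e x * c' x)"
    define c where "c = c'(x0 := - s / M e x0)"
    have sum_split: "(\<Sum>x\<in>X. g x * c x) = g x0 * c x0 + (\<Sum>x\<in>X - {x0}. g x * c' x)" for g
    proof -
      have "(\<Sum>x\<in>X - {x0}. g x * c x) = (\<Sum>x\<in>X - {x0}. g x * c' x)"
        by (rule sum.cong) (auto simp: c_def)
      then show ?thesis using x0 insert.prems by (simp add: sum.remove)
    qed
    have "(\<Sum>x\<in>X. M e' x * c x) = 0" if "e' \<in> E" for e'
    proof -
      have "(\<Sum>x\<in>X - {x0}. M' e' x * c' x)
            = (\<Sum>x\<in>X - {x0}. M e' x * c' x) - M e' x0 / M e x0 * s"
        by (simp add: M'_def s_def algebra_simps sum_subtractf sum_distrib_left)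
      then show ?thesis using c'(2) that x0 unfolding sum_split by (simp add: c_def)
    qed
    moreover have "(\<Sum>x\<in>X. M e x * c x) = 0" using x0 unfolding sum_split by (simp add: s_def c_def)
    moreover have "\<exists>x\<in>X. c x \<noteq> 0" using c'(1) by (auto simp: c_def)
    ultimately show ?thesis by auto
  qed
qed

lemma margin_A_insert:
  assumes "finite F" "d \<notin> F"
  shows "margin_A (insert d F) i = (if fst d = i then Suc (margin_A F i) else margin_A F i)"
  using assms unfolding margin_A_def Collect_mem_insert by simp

lemma margin_B_insert:
  assumes "finite F" "d \<notin> F"
  shows "margin_B (insert d F) j = (if snd d = j then Suc (margin_B F j) else margin_B F j)"
  using assms unfolding margin_B_def Collect_mem_insert by simp

lemma margin_A_swap: "margin_A (prod.swap ` F) i = margin_B F i"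
  unfolding margin_A_def margin_B_def filter_image_swap
  by (subst card_image) (auto intro: inj_on_subset[OF swap_inj_on])

lemma margin_B_swap: "margin_B (prod.swap ` F) j = margin_A F j"
  unfolding margin_A_def margin_B_def filter_image_swap
  by (subst card_image) (auto intro: inj_on_subset[OF swap_inj_on])

lemma card_eq_sum_margin_A:
  assumes "finite A" "finite B" "F \<subseteq> A \<times> B"
  shows "card F = (\<Sum>i\<in>A. margin_A F i)"
proof -
  have "finite F" using assms finite_subset by blast
  moreover have "fst ` F \<subseteq> A" using assms(3) by auto
  ultimately show ?thesis
    using sum.group[of F A fst "\<lambda>_. 1::nat"] assms(1) by (simp add: margin_A_def)
qed

lemma card_eq_sum_margin_B:
  assumes "finite A" "finite B" "F \<subseteq> A \<times> B"
  shows "card F = (\<Sum>j\<in>B. margin_B F j)"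
proof -
  have "finite F" using assms finite_subset by blast
  moreover have "snd ` F \<subseteq> B" using assms(3) by auto
  ultimately show ?thesis
    using sum.group[of F B snd "\<lambda>_. 1::nat"] assms(2) by (simp add: margin_B_def)
qed

section \<open>Weightings with vanishing margins\<close>

definition zero_margin_weighting :: "(nat \<times> nat) set \<Rightarrow> (nat \<times> nat \<Rightarrow> real) \<Rightarrow> bool" where
  "zero_margin_weighting F c \<longleftrightarrow>
     (\<forall>i. (\<Sum>d\<in>{d\<in>F. fst d = i}. c d) = 0) \<and> (\<forall>j. (\<Sum>d\<in>{d\<in>F. snd d = j}. c d) = 0)"

definition margin_independent :: "(nat \<times> nat) set \<Rightarrow> bool" where
  "margin_independent F \<longleftrightarrow> (\<forall>c. zero_margin_weighting F c \<longrightarrow> (\<forall>d\<in>F. c d = 0))"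

lemma zero_margin_weighting_cong:
  assumes "\<And>d. d \<in> F \<Longrightarrow> c d = c' d"
  shows "zero_margin_weighting F c \<longleftrightarrow> zero_margin_weighting F c'"
proof -
  have "(\<Sum>d\<in>{d\<in>F. P d}. c d) = (\<Sum>d\<in>{d\<in>F. P d}. c' d)" for P
    using assms by (intro sum.cong) auto
  then show ?thesis by (simp add: zero_margin_weighting_def)
qed

lemma zero_margin_weighting_insert:
  assumes "finite F" "x \<notin> F" "c x = 0"
  shows "zero_margin_weighting (insert x F) c \<longleftrightarrow> zero_margin_weighting F c"
proof -
  have "(\<Sum>d\<in>{d\<in>insert x F. P d}. c d) = (\<Sum>d\<in>{d\<in>F. P d}. c d)" for P
    unfolding Collect_mem_insert using assms by simp
  then show ?thesis by (simp add: zero_margin_weighting_def)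
qed

lemma margin_independent_insert_leaf:
  assumes fin: "finite F" and leaf: "\<forall>d\<in>F. snd d \<noteq> j"
  shows "margin_independent (insert (i, j) F) \<longleftrightarrow> margin_independent F"
proof
  have new: "(i, j) \<notin> F" using leaf by auto
  assume ind: "margin_independent (insert (i, j) F)"
  show "margin_independent F"
    unfolding margin_independent_def
  proof (intro allI impI ballI)
    fix c d assume "zero_margin_weighting F c" and d: "d \<in> F"
    then have "zero_margin_weighting F (c((i, j) := 0))"
      using new by (subst zero_margin_weighting_cong) auto
    then have "zero_margin_weighting (insert (i, j) F) (c((i, j) := 0))"
      using zero_margin_weighting_insert[OF fin new] by simp
    then have "(c((i, j) := 0)) d = 0"
      using ind d unfolding margin_independent_def by blast
    then show "c d = 0" using d new by (auto split: if_splits)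
  qed
next
  have new: "(i, j) \<notin> F" using leaf by auto
  assume ind: "margin_independent F"
  show "margin_independent (insert (i, j) F)"
    unfolding margin_independent_def
  proof (intro allI impI)
    fix c assume zero: "zero_margin_weighting (insert (i, j) F) c"
    have "{d\<in>insert (i, j) F. snd d = j} = {(i, j)}" using leaf by auto
    moreover have "(\<Sum>d\<in>{d\<in>insert (i, j) F. snd d = j}. c d) = 0"
      using zero unfolding zero_margin_weighting_def by blast
    ultimately have cij: "c (i, j) = 0" by simp
    then have "zero_margin_weighting F c"
      using zero zero_margin_weighting_insert[OF fin new] by simp
    then show "\<forall>d\<in>insert (i, j) F. c d = 0"
      using ind cij unfolding margin_independent_def by auto
  qed
qed

lemma zero_margin_weighting_swap:
  "zero_margin_weighting (prod.swap ` F) c \<longleftrightarrow> zero_margin_weighting F (c \<circ> prod.swap)"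
proof -
  have "(\<Sum>d\<in>{d\<in>prod.swap ` F. P d}. c d) = (\<Sum>d\<in>{d\<in>F. P (prod.swap d)}. (c \<circ> prod.swap) d)" for P
    unfolding filter_image_swap by (subst sum.reindex) (auto intro: inj_on_subset[OF swap_inj_on])
  then show ?thesis unfolding zero_margin_weighting_def by auto
qed

lemma margin_independent_swap:
  "margin_independent (prod.swap ` F) \<longleftrightarrow> margin_independent F"
  unfolding margin_independent_def zero_margin_weighting_swap
proof (intro iffI allI impI ballI)
  fix c d
  assume "\<forall>c. zero_margin_weighting F (c \<circ> prod.swap) \<longrightarrow> (\<forall>d\<in>prod.swap ` F. c d = 0)"
    and "zero_margin_weighting F c" and "d \<in> F"
  then show "c d = 0" by (elim allE[of _ "c \<circ> prod.swap"]) (simp add: comp_assoc)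
next
  fix c d
  assume "\<forall>c. zero_margin_weighting F c \<longrightarrow> (\<forall>d\<in>F. c d = 0)"
    and "zero_margin_weighting F (c \<circ> prod.swap)" and "d \<in> prod.swap ` F"
  then show "c d = 0" by (metis comp_apply image_iff)
qed

lemma margin_independent_card_le:
  assumes fin: "finite A" "finite B" and sub: "F \<subseteq> A \<times> B" and ind: "margin_independent F"
  shows "card F \<le> card A + card B - 1"
proof (rule ccontr)
  assume "\<not> ?thesis"
  then have many: "card A + card B - 1 < card F" by simp
  have finF: "finite F" using sub fin finite_subset by blast
  obtain j0 where j0: "j0 \<in> B" using many sub by fastforce
  \<comment> \<open>One equation per row and per column except \<open>j0\<close>, whose equation follows from the others.\<close>
  define E :: "(nat + nat) set" where "E = Inl ` A \<union> Inr ` (B - {j0})"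
  define M :: "nat + nat \<Rightarrow> nat \<times> nat \<Rightarrow> real" where
    "M = (\<lambda>e d. case e of Inl i \<Rightarrow> of_bool (fst d = i) | Inr j \<Rightarrow> of_bool (snd d = j))"
  have "card E \<le> card A + card (B - {j0})"
    unfolding E_def
    by (rule order_trans[OF card_Un_le add_mono[OF card_image_le card_image_le]]) (use fin in auto)
  also have "\<dots> < card F" using many j0 fin card_gt_0_iff[of B] by auto
  finally obtain c where c: "\<exists>d\<in>F. c d \<noteq> 0" "\<forall>e\<in>E. (\<Sum>d\<in>F. M e d * c d) = 0"
    using homogeneous_system_nontrivial_solution[of E F M] fin finF unfolding E_def by auto
  have fiber: "(\<Sum>d\<in>F. M e d * c d) = (\<Sum>d\<in>{d\<in>F. P d}. c d)" if "\<And>d. M e d = of_bool (P d)" for e P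
    unfolding sum.inter_filter[OF finF] by (rule sum.cong) (simp_all add: that)
  have rows: "(\<Sum>d\<in>{d\<in>F. fst d = i}. c d) = 0" for i
  proof (cases "i \<in> A")
    case True
    then show ?thesis
      using c(2)[rule_format, of "Inl i"] fiber[of "Inl i" "\<lambda>d. fst d = i"] by (simp add: E_def M_def)
  next
    case False
    then have "{d\<in>F. fst d = i} = {}" using sub by auto
    then show ?thesis by (simp only: sum.empty)
  qed
  have total: "(\<Sum>d\<in>F. c d) = 0"
    using sum.group[OF finF fin(1), of fst c] sub rows by fastforce
  have columns: "(\<Sum>d\<in>{d\<in>F. snd d = j}. c d) = 0" if "j \<in> B" "j \<noteq> j0" for j
    using c(2)[rule_format, of "Inr j"] fiber[of "Inr j" "\<lambda>d. snd d = j"] that by (simp add: E_def M_def)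
  have "(\<Sum>d\<in>{d\<in>F. snd d = j}. c d) = 0" for j
    by (rule fiber_sum_eq_0_if_all_but_one[where f = snd and K = B and l = j0])
       (use finF fin sub total columns in auto)
  with rows have "zero_margin_weighting F c" by (simp add: zero_margin_weighting_def)
  with ind c(1) show False unfolding margin_independent_def by blast
qed

section \<open>Saturated fractions\<close>

lemma design_row_weighted_sum:
  assumes "finite F"
  shows "(\<Sum>d\<in>F. design_row I J d k * c d) =
    (if k = 0 then (\<Sum>d\<in>F. c d)
     else if k \<le> I - 1 then (\<Sum>d\<in>{d\<in>F. fst d = k}. c d)
     else if k \<le> I + J - 2 then (\<Sum>d\<in>{d\<in>F. snd d = k - (I - 1)}. c d)
     else 0)"
  unfolding sum.inter_filter[OF assms] by (auto simp: design_row_def intro!: sum.cong)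

lemma design_kernel_iff_zero_margin_weighting:
  assumes sub: "F \<subseteq> {1..I} \<times> {1..J}" and "1 \<le> I" "1 \<le> J"
  shows "(\<forall>k < I + J - 1. (\<Sum>d\<in>F. design_row I J d k * c d) = 0) \<longleftrightarrow> zero_margin_weighting F c"
proof -
  have fin: "finite F" using sub finite_subset by blast
  have group: "(\<Sum>d\<in>F. c d) = (\<Sum>i\<in>{1..I}. \<Sum>d\<in>{d\<in>F. fst d = i}. c d)"
    using sum.group[OF fin _, of "{1..I}" fst c] sub by fastforce
  have "(\<forall>k < I + J - 1. (\<Sum>d\<in>F. design_row I J d k * c d) = 0) \<longleftrightarrow>
    (\<Sum>d\<in>F. c d) = 0 \<and> (\<forall>i\<in>{1..I} - {I}. (\<Sum>d\<in>{d\<in>F. fst d = i}. c d) = 0)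
      \<and> (\<forall>j\<in>{1..J} - {J}. (\<Sum>d\<in>{d\<in>F. snd d = j}. c d) = 0)"
  proof (intro iffI conjI ballI allI impI)
    assume eqs: "\<forall>k < I + J - 1. (\<Sum>d\<in>F. design_row I J d k * c d) = 0"
    then show "(\<Sum>d\<in>F. c d) = 0"
      using design_row_weighted_sum[OF fin, of I J 0 c] assms by auto
    show "(\<Sum>d\<in>{d\<in>F. fst d = i}. c d) = 0" if "i \<in> {1..I} - {I}" for i
    proof -
      have "i \<noteq> 0" "i \<le> I - 1" "i < I + J - 1" using that assms by auto
      then show ?thesis using eqs design_row_weighted_sum[OF fin, of I J i c] by simp
    qed
    show "(\<Sum>d\<in>{d\<in>F. snd d = j}. c d) = 0" if "j \<in> {1..J} - {J}" for j
    proof -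
      have "j + (I - 1) \<noteq> 0" "\<not> j + (I - 1) \<le> I - 1" "j + (I - 1) \<le> I + J - 2"
        "j + (I - 1) < I + J - 1" using that assms by auto
      then show ?thesis using eqs design_row_weighted_sum[OF fin, of I J "j + (I - 1)" c] by simp
    qed
  next
    fix k assume "(\<Sum>d\<in>F. c d) = 0 \<and> (\<forall>i\<in>{1..I} - {I}. (\<Sum>d\<in>{d\<in>F. fst d = i}. c d) = 0)
      \<and> (\<forall>j\<in>{1..J} - {J}. (\<Sum>d\<in>{d\<in>F. snd d = j}. c d) = 0)" and "k < I + J - 1"
    moreover have "k \<in> {1..I} - {I}" if "k \<noteq> 0" "k \<le> I - 1"
      using that by auto
    moreover have "k - (I - 1) \<in> {1..J} - {J}" if "\<not> k \<le> I - 1" "k \<le> I + J - 2"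
      using that assms by auto
    ultimately show "(\<Sum>d\<in>F. design_row I J d k * c d) = 0"
      unfolding design_row_weighted_sum[OF fin] by auto
  qed
  also have "\<dots> \<longleftrightarrow> zero_margin_weighting F c"
  proof
    assume eqs: "(\<Sum>d\<in>F. c d) = 0 \<and> (\<forall>i\<in>{1..I} - {I}. (\<Sum>d\<in>{d\<in>F. fst d = i}. c d) = 0)
      \<and> (\<forall>j\<in>{1..J} - {J}. (\<Sum>d\<in>{d\<in>F. snd d = j}. c d) = 0)"
    have "(\<Sum>d\<in>{d\<in>F. fst d = i}. c d) = 0" for i
      by (rule fiber_sum_eq_0_if_all_but_one[where f = fst and K = "{1..I}" and l = I])
         (use fin sub eqs in auto)
    moreover have "(\<Sum>d\<in>{d\<in>F. snd d = j}. c d) = 0" for j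
      by (rule fiber_sum_eq_0_if_all_but_one[where f = snd and K = "{1..J}" and l = J])
         (use fin sub eqs in auto)
    ultimately show "zero_margin_weighting F c" by (simp add: zero_margin_weighting_def)
  qed (simp add: zero_margin_weighting_def group)
  finally show ?thesis .
qed

lemma det_design_matrix_nonzero_iff:
  assumes fin: "finite F" and card_F: "card F = I + J - 1"
  shows "det (design_matrix I J F) \<noteq> 0 \<longleftrightarrow>
    (\<forall>c. (\<forall>k < I + J - 1. (\<Sum>d\<in>F. design_row I J d k * c d) = 0) \<longrightarrow> (\<forall>d\<in>F. c d = 0))"
proof -
  define n L where "n = card F" and "L = sorted_list_of_set F"
  let ?X = "transpose_mat (design_matrix I J F)"
  let ?v = "\<lambda>c. vec n (\<lambda>k. c (L ! k)) :: real vec"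
  have X: "design_matrix I J F \<in> carrier_mat n n" using card_F by (simp add: design_matrix_def n_def)
  have L: "distinct L" "length L = n" "set L = F" using fin by (simp_all add: L_def n_def)
  have kernel: "?X *\<^sub>v ?v c = 0\<^sub>v n \<longleftrightarrow> (\<forall>k < I + J - 1. (\<Sum>d\<in>F. design_row I J d k * c d) = 0)" for c
  proof -
    have "(?X *\<^sub>v ?v c) $ k = (\<Sum>d\<in>F. design_row I J d k * c d)" if "k < n" for k
      using that card_F sum_sorted_list_of_set_nth[OF fin, of "\<lambda>d. design_row I J d k * c d"]
      by (simp add: design_matrix_def scalar_prod_def atLeast0LessThan n_def L_def)
    then show ?thesis using X card_F by (auto simp: vec_eq_iff n_def)
  qed
  have every_vec: "\<exists>c. v = ?v c" if "v \<in> carrier_vec n" for v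
  proof
    have "inj_on (nth L) {..<n}" using L by (simp add: inj_on_nth)
    then show "v = ?v (\<lambda>d. v $ the_inv_into {..<n} (nth L) d)"
      using that by (auto simp: vec_eq_iff the_inv_into_f_f)
  qed
  have zero: "?v c = 0\<^sub>v n \<longleftrightarrow> (\<forall>d\<in>F. c d = 0)" for c
    using L by (auto simp: vec_eq_iff) (metis in_set_conv_nth)
  have "det (design_matrix I J F) \<noteq> 0 \<longleftrightarrow> det ?X \<noteq> 0"
    using det_transpose[OF X] by simp
  also have "\<dots> \<longleftrightarrow> (\<forall>v \<in> carrier_vec n. ?X *\<^sub>v v = 0\<^sub>v n \<longrightarrow> v = 0\<^sub>v n)"
    using det_0_iff_vec_prod_zero[of ?X n] X by auto
  also have "\<dots> \<longleftrightarrow> (\<forall>c. ?X *\<^sub>v ?v c = 0\<^sub>v n \<longrightarrow> ?v c = 0\<^sub>v n)"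
    using every_vec by (metis vec_carrier)
  finally show ?thesis by (simp only: kernel zero)
qed

lemma saturated_iff_margin_independent:
  assumes "F \<subseteq> {1..I} \<times> {1..J}" "1 \<le> I" "1 \<le> J"
  shows "saturated I J F \<longleftrightarrow> card F = I + J - 1 \<and> margin_independent F"
  using det_design_matrix_nonzero_iff[of F I J] design_kernel_iff_zero_margin_weighting[OF assms]
    finite_subset[OF assms(1)]
  by (auto simp: saturated_def margin_independent_def)

section \<open>Counting by removal of a leaf\<close>

definition indep_fractions ::
    "nat set \<Rightarrow> nat set \<Rightarrow> (nat \<Rightarrow> nat) \<Rightarrow> (nat \<Rightarrow> nat) \<Rightarrow> (nat \<times> nat) set set" where
  "indep_fractions A B mA mB =
     {F. F \<subseteq> A \<times> B \<and> margin_independent F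
         \<and> (\<forall>i\<in>A. margin_A F i = mA i) \<and> (\<forall>j\<in>B. margin_B F j = mB j)}"

definition admissible_margins :: "nat set \<Rightarrow> nat set \<Rightarrow> (nat \<Rightarrow> nat) \<Rightarrow> (nat \<Rightarrow> nat) \<Rightarrow> bool" where
  "admissible_margins A B mA mB \<longleftrightarrow>
     finite A \<and> finite B \<and> A \<noteq> {} \<and> B \<noteq> {} \<and> (\<forall>i\<in>A. 0 < mA i) \<and> (\<forall>j\<in>B. 0 < mB j)
     \<and> sum mA A = card A + card B - 1 \<and> sum mB B = card A + card B - 1"

lemma admissible_margins_swap:
  "admissible_margins A B mA mB \<Longrightarrow> admissible_margins B A mB mA"
  unfolding admissible_margins_def by (auto simp: add.commute)

lemma finite_indep_fractions: "finite A \<Longrightarrow> finite B \<Longrightarrow> finite (indep_fractions A B mA mB)"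
  unfolding indep_fractions_def by (rule finite_subset[of _ "Pow (A \<times> B)"]) auto

lemma card_indep_fractions_swap:
  assumes "finite A" "finite B"
  shows "card (indep_fractions B A mB mA) = card (indep_fractions A B mA mB)"
proof -
  have "indep_fractions B A mB mA = image prod.swap ` indep_fractions A B mA mB"
  proof (intro equalityI subsetI)
    fix F assume "F \<in> indep_fractions B A mB mA"
    then have "prod.swap ` F \<in> indep_fractions A B mA mB"
      by (auto simp: indep_fractions_def margin_independent_swap margin_A_swap margin_B_swap)
    moreover have "F = prod.swap ` (prod.swap ` F)" by (simp add: image_image)
    ultimately show "F \<in> image prod.swap ` indep_fractions A B mA mB" by blast
  qed (auto simp: indep_fractions_def margin_independent_swap margin_A_swap margin_B_swap)
  moreover have "inj (image (prod.swap :: nat \<times> nat \<Rightarrow> nat \<times> nat))"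
    by (rule injI) (simp add: inj_image_eq_iff)
  ultimately show ?thesis by (metis card_image inj_on_subset subset_UNIV)
qed

lemma insert_leaf_mem_indep_fractions_iff:
  assumes fin: "finite A" "finite B" and sub: "F \<subseteq> A \<times> (B - {j})"
    and i: "i \<in> A" "0 < mA i" and j: "j \<in> B" "mB j = 1"
  shows "insert (i, j) F \<in> indep_fractions A B mA mB
     \<longleftrightarrow> F \<in> indep_fractions A (B - {j}) (mA(i := mA i - 1)) mB"
proof -
  have finF: "finite F" using fin sub finite_subset by blast
  have leaf: "\<forall>d\<in>F. snd d \<noteq> j" and new: "(i, j) \<notin> F" using sub by auto
  have "{d\<in>F. snd d = j} = {}" using leaf by auto
  then have "margin_B F j = 0" by (metis card.empty margin_B_def)
  then have "(\<forall>y\<in>B. margin_B (insert (i, j) F) y = mB y) \<longleftrightarrow> (\<forall>y\<in>B - {j}. margin_B F y = mB y)"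
    using j by (auto simp: margin_B_insert[OF finF new])
  moreover have "(\<forall>x\<in>A. margin_A (insert (i, j) F) x = mA x)
      \<longleftrightarrow> (\<forall>x\<in>A. margin_A F x = (mA(i := mA i - 1)) x)"
    using i by (auto simp: margin_A_insert[OF finF new])
  ultimately show ?thesis
    using sub i j margin_independent_insert_leaf[OF finF leaf]
    by (auto simp: indep_fractions_def)
qed

lemma indep_fractions_leaf_column:
  assumes fin: "finite A" "finite B" and pos: "\<forall>i\<in>A. 0 < mA i" and j: "j \<in> B" "mB j = 1"
  shows "indep_fractions A B mA mB
     = (\<Union>i\<in>A. insert (i, j) ` indep_fractions A (B - {j}) (mA(i := mA i - 1)) mB)"
proof (intro equalityI subsetI)
  fix F assume F: "F \<in> indep_fractions A B mA mB"
  then have sub: "F \<subseteq> A \<times> B" and card_col: "card {d\<in>F. snd d = j} = 1"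
    using j by (auto simp: indep_fractions_def margin_B_def)
  from card_col obtain d where d: "{d'\<in>F. snd d' = j} = {d}"
    by (rule card_1_singletonE)
  define i where "i = fst d"
  have "d = (i, j)" "d \<in> F" using d by (auto simp: i_def)
  then have F_eq: "F = insert (i, j) (F - {(i, j)})" and i: "i \<in> A"
    and rest: "F - {(i, j)} \<subseteq> A \<times> (B - {j})"
    using sub d by auto
  have "F - {(i, j)} \<in> indep_fractions A (B - {j}) (mA(i := mA i - 1)) mB"
    using insert_leaf_mem_indep_fractions_iff[where mA = mA and mB = mB and j = j,
        OF fin rest i pos[rule_format, OF i] j] F F_eq
    by simp
  with i F_eq show "F \<in> (\<Union>i\<in>A. insert (i, j) ` indep_fractions A (B - {j}) (mA(i := mA i - 1)) mB)"
    by blast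
next
  fix F assume "F \<in> (\<Union>i\<in>A. insert (i, j) ` indep_fractions A (B - {j}) (mA(i := mA i - 1)) mB)"
  then obtain i F' where i: "i \<in> A" and F: "F = insert (i, j) F'"
    and F': "F' \<in> indep_fractions A (B - {j}) (mA(i := mA i - 1)) mB" by blast
  then have "F' \<subseteq> A \<times> (B - {j})" by (simp add: indep_fractions_def)
  then show "F \<in> indep_fractions A B mA mB"
    using insert_leaf_mem_indep_fractions_iff[where mA = mA and mB = mB and j = j,
        OF fin _ i pos[rule_format, OF i] j] F F'
    by simp
qed

lemma card_indep_fractions_leaf_column:
  assumes fin: "finite A" "finite B" and pos: "\<forall>i\<in>A. 0 < mA i" and j: "j \<in> B" "mB j = 1"
  shows "card (indep_fractions A B mA mB)
     = (\<Sum>i\<in>A. card (indep_fractions A (B - {j}) (mA(i := mA i - 1)) mB))"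
proof -
  let ?T = "\<lambda>i. indep_fractions A (B - {j}) (mA(i := mA i - 1)) mB"
  have leaf: "(i, j) \<notin> F" if "F \<in> ?T i'" for F i i'
    using that by (auto simp: indep_fractions_def)
  have "(i, j) \<notin> insert (i', j) F" if "F \<in> ?T i'" "i \<noteq> i'" for F i i'
    using leaf[OF that(1)] that(2) by simp
  then have "insert (i, j) ` ?T i \<inter> insert (i', j) ` ?T i' = {}" if "i \<noteq> i'" for i i'
    using that by fast
  then have "card (\<Union>i\<in>A. insert (i, j) ` ?T i) = (\<Sum>i\<in>A. card (insert (i, j) ` ?T i))"
    using fin by (intro card_UN_disjoint) (auto simp: finite_indep_fractions)
  also have "\<dots> = (\<Sum>i\<in>A. card (?T i))"
  proof (intro sum.cong refl card_image inj_onI)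
    fix i F F' assume "F \<in> ?T i" "F' \<in> ?T i" "insert (i, j) F = insert (i, j) F'"
    then show "F = F'" using insert_ident[OF leaf leaf] by blast
  qed
  finally show ?thesis
    using indep_fractions_leaf_column[where mA = mA and mB = mB and j = j, OF assms] by simp
qed

lemma indep_fractions_eq_empty_if_zero_margin:
  assumes fin: "finite A" "finite B" and "B \<noteq> {}" and i: "i \<in> A" "mA i = 0"
    and sum_mB: "sum mB B = card A + card B - 1"
  shows "indep_fractions A B mA mB = {}"
proof (rule equals0I)
  fix F assume F: "F \<in> indep_fractions A B mA mB"
  then have "card {d\<in>F. fst d = i} = 0" and sub: "F \<subseteq> A \<times> B"
    using i by (auto simp: indep_fractions_def margin_A_def)
  moreover have "finite F" using sub fin finite_subset by blast
  ultimately have "F \<subseteq> (A - {i}) \<times> B" by fastforce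
  then have "card F \<le> card (A - {i}) + card B - 1"
    using F fin by (intro margin_independent_card_le) (auto simp: indep_fractions_def)
  moreover have "card F = sum mB B"
    using F card_eq_sum_margin_B[OF fin sub] by (simp add: indep_fractions_def)
  moreover have "card A > 0" "card B > 0" using fin i \<open>B \<noteq> {}\<close> by (auto simp: card_gt_0_iff)
  ultimately show False using sum_mB fin i by simp
qed

lemma admissible_margins_remove_leaf_column:
  assumes adm: "admissible_margins A B mA mB" and j: "j \<in> B" "mB j = 1" "2 \<le> card B"
    and i: "i \<in> A" "2 \<le> mA i"
  shows "admissible_margins A (B - {j}) (mA(i := mA i - 1)) mB"
proof -
  have fin: "finite A" "finite B" and sum_mA: "sum mA A = card A + card B - 1"
    and sum_mB: "sum mB B = card A + card B - 1"
    using adm by (auto simp: admissible_margins_def)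
  have card_B': "card (B - {j}) = card B - 1" using fin j by simp
  then have "B - {j} \<noteq> {}" using j(3) by (intro notI) simp
  moreover have "sum (mA(i := mA i - 1)) A = card A + card (B - {j}) - 1"
    using sum_update_pred[of A i mA] fin i sum_mA card_B' j(3) by simp
  moreover have "sum mB (B - {j}) = card A + card (B - {j}) - 1"
    using sum.remove[OF fin(2) j(1), of mB] j sum_mB card_B' by simp
  ultimately show ?thesis
    using adm i by (simp add: admissible_margins_def)
qed

lemma card_indep_fractions_leaf_step:
  assumes adm: "admissible_margins A B mA mB" and j: "j \<in> B" "mB j = 1" "2 \<le> card B"
    and IH: "\<And>i. i \<in> A \<Longrightarrow> 2 \<le> mA i \<Longrightarrow>
      card (indep_fractions A (B - {j}) (mA(i := mA i - 1)) mB)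
        * (\<Prod>x\<in>A. fact ((mA(i := mA i - 1)) x - 1)) * (\<Prod>y\<in>B - {j}. fact (mB y - 1))
      = fact (card A - 1) * fact (card (B - {j}) - 1)"
  shows "card (indep_fractions A B mA mB) * (\<Prod>x\<in>A. fact (mA x - 1)) * (\<Prod>y\<in>B. fact (mB y - 1))
    = fact (card A - 1) * fact (card B - 1)"
proof -
  have fin: "finite A" "finite B" and pos: "\<forall>i\<in>A. 0 < mA i"
    and sum_mA: "sum mA A = card A + card B - 1" and sum_mB: "sum mB B = card A + card B - 1"
    using adm by (auto simp: admissible_margins_def)
  let ?T = "\<lambda>i. indep_fractions A (B - {j}) (mA(i := mA i - 1)) mB"
  let ?P = "\<Prod>x\<in>A. fact (mA x - 1) :: nat"
  let ?Q = "\<Prod>y\<in>B. fact (mB y - 1) :: nat"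
  let ?R = "fact (card A - 1) * fact (card B - 2) :: nat"
  have card_B': "card (B - {j}) = card B - 1" using fin j by simp
  then have B'_ne: "B - {j} \<noteq> {}" using j(3) by (intro notI) simp
  have Q: "?Q = (\<Prod>y\<in>B - {j}. fact (mB y - 1))"
    using prod.remove[OF fin(2) j(1), of "\<lambda>y. fact (mB y - 1)"] j by simp
  have summand: "card (?T i) * ?P * ?Q = (mA i - 1) * ?R" if i: "i \<in> A" for i
  proof (cases "mA i = 1")
    case True
    \<comment> \<open>Then \<open>(i, j)\<close> would be an isolated cell, leaving too many cells for the other rows
      and columns.\<close>
    have "?T i = {}"
      using fin i True B'_ne sum_mB card_B' j(3) sum.remove[OF fin(2) j(1), of mB] j(2)
      by (intro indep_fractions_eq_empty_if_zero_margin) auto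
    then show ?thesis using True by simp
  next
    case False
    moreover have "0 < mA i" using pos i by blast
    ultimately have "2 \<le> mA i" by linarith
    then show ?thesis
      using IH[OF i] prod_fact_update_pred[OF fin(1) i, of mA] Q card_B'
      by (simp add: numeral_2_eq_2 mult_ac)
  qed
  have "card (indep_fractions A B mA mB) * ?P * ?Q = (\<Sum>i\<in>A. card (?T i) * ?P * ?Q)"
    using card_indep_fractions_leaf_column[where mA = mA and mB = mB, OF fin pos j(1,2)]
    by (simp add: sum_distrib_right)
  also have "\<dots> = (\<Sum>i\<in>A. (mA i - 1) * ?R)"
    by (rule sum.cong[OF refl summand])
  also have "\<dots> = (\<Sum>i\<in>A. mA i - 1) * ?R"
    by (simp add: sum_distrib_right)
  also have "(\<Sum>i\<in>A. mA i - 1) = card B - 1"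
    using sum_minus_one_eq[OF pos] sum_mA by simp
  also have "(card B - 1) * ?R = fact (card A - 1) * fact (card B - 1)"
    using j(3) fact_reduce[where 'a = nat, of "card B - 1"] by (simp add: numeral_2_eq_2 mult_ac)
  finally show ?thesis .
qed

lemma indep_fractions_single_cell:
  assumes "mA i = 1" "mB j = 1"
  shows "indep_fractions {i} {j} mA mB = {{(i, j)}}"
proof (intro equalityI subsetI)
  fix F assume F: "F \<in> indep_fractions {i} {j} mA mB"
  then have "F \<subseteq> {(i, j)}" and "margin_A F i = 1"
    using assms by (auto simp: indep_fractions_def)
  then show "F \<in> {{(i, j)}}" by (auto simp: margin_A_def subset_singleton_iff)
next
  have "margin_independent {(i, j)}"
    using margin_independent_insert_leaf[of "{}" j i] by (simp add: margin_independent_def)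
  moreover have "{d\<in>{(i, j)}. fst d = i} = {(i, j)}" "{d\<in>{(i, j)}. snd d = j} = {(i, j)}"
    by auto
  ultimately show "F \<in> indep_fractions {i} {j} mA mB" if "F \<in> {{(i, j)}}" for F
    using that assms by (simp add: indep_fractions_def margin_A_def margin_B_def)
qed

lemma admissible_margins_has_leaf:
  assumes "admissible_margins A B mA mB"
  shows "(\<exists>j\<in>B. mB j = 1) \<or> (\<exists>i\<in>A. mA i = 1)"
proof (rule ccontr)
  assume no_leaf: "\<not> ?thesis"
  have two: "2 \<le> m" if "0 < m" "m \<noteq> 1" for m :: nat
    using that by linarith
  have "\<forall>j\<in>B. 2 \<le> mB j" "\<forall>i\<in>A. 2 \<le> mA i"
    using no_leaf assms two unfolding admissible_margins_def by blast+
  then have "2 * card B \<le> sum mB B" "2 * card A \<le> sum mA A"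
    using sum_mono[of B "\<lambda>_. 2" mB] sum_mono[of A "\<lambda>_. 2" mA] by auto
  moreover have "card A > 0" using assms by (auto simp: admissible_margins_def card_gt_0_iff)
  ultimately show False using assms by (auto simp: admissible_margins_def)
qed

lemma admissible_margins_leaf_column_card:
  assumes "admissible_margins A B mA mB" "j \<in> B" "mB j = 1" "2 < card A + card B"
  shows "2 \<le> card B"
proof (rule ccontr)
  assume "\<not> ?thesis"
  moreover have "card B > 0" using assms by (auto simp: admissible_margins_def card_gt_0_iff)
  ultimately have "card B = 1" by simp
  then have "B = {j}" using assms(2) by (metis card_1_singletonE singletonD)
  then show False using assms by (auto simp: admissible_margins_def)
qed

lemma card_indep_fractions:
  assumes "admissible_margins A B mA mB"
  shows "card (indep_fractions A B mA mB) * (\<Prod>i\<in>A. fact (mA i - 1)) * (\<Prod>j\<in>B. fact (mB j - 1))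
    = fact (card A - 1) * fact (card B - 1)"
  using assms
proof (induction "card A + card B" arbitrary: A B mA mB rule: less_induct)
  case less
  have fin: "finite A" "finite B" and "card A > 0" "card B > 0"
    using less.prems by (auto simp: admissible_margins_def card_gt_0_iff)
  show ?case
  proof (cases "card A + card B \<le> 2")
    case True
    then have "card A = 1" "card B = 1" using \<open>card A > 0\<close> \<open>card B > 0\<close> by simp_all
    then obtain i j where "A = {i}" "B = {j}" by (meson card_1_singletonE)
    moreover from this have "mA i = 1" "mB j = 1"
      using less.prems by (auto simp: admissible_margins_def)
    ultimately show ?thesis by (simp add: indep_fractions_single_cell)
  next
    case False
    from admissible_margins_has_leaf[OF less.prems] show ?thesis
    proof (elim disjE bexE)
      fix j assume j: "j \<in> B" "mB j = 1"
      have "2 \<le> card B"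
        using admissible_margins_leaf_column_card[OF less.prems j] False by simp
      then show ?thesis
        using j fin less.prems
        by (intro card_indep_fractions_leaf_step[OF less.prems j] less.hyps
              admissible_margins_remove_leaf_column) auto
    next
      fix i assume i: "i \<in> A" "mA i = 1"
      have adm: "admissible_margins B A mB mA" by (rule admissible_margins_swap[OF less.prems])
      have "2 \<le> card A"
        using admissible_margins_leaf_column_card[OF adm i] False by simp
      then have "card (indep_fractions B A mB mA) * (\<Prod>j\<in>B. fact (mB j - 1)) * (\<Prod>i\<in>A. fact (mA i - 1))
          = fact (card B - 1) * fact (card A - 1)"
        using i fin adm
        by (intro card_indep_fractions_leaf_step[OF adm i] less.hyps
              admissible_margins_remove_leaf_column) auto
      then show ?thesis by (simp add: card_indep_fractions_swap fin mult_ac)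
    qed
  qed
qed

theorem proposition4p5:
  fixes I J :: nat and mA mB :: "nat \<Rightarrow> nat"
  assumes "I \<ge> 2" and "J \<ge> 2"
    and "\<forall>i\<in>{1..I}. mA i > 0" and "\<forall>j\<in>{1..J}. mB j > 0"
    and "(\<Sum>i=1..I. mA i) = I + J - 1" and "(\<Sum>j=1..J. mB j) = I + J - 1"
  shows "card {F. F \<subseteq> {1..I} \<times> {1..J} \<and> saturated I J F
                \<and> (\<forall>i\<in>{1..I}. margin_A F i = mA i) \<and> (\<forall>j\<in>{1..J}. margin_B F j = mB j)}
         = multinomial (I - 1) (\<lambda>j. mB j - 1) {1..J} * multinomial (J - 1) (\<lambda>i. mA i - 1) {1..I}"
proof -
  let ?P = "\<Prod>i\<in>{1..I}. fact (mA i - 1) :: nat" and ?Q = "\<Prod>j\<in>{1..J}. fact (mB j - 1) :: nat"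
  let ?N = "card (indep_fractions {1..I} {1..J} mA mB)"
  let ?MB = "multinomial (I - 1) (\<lambda>j. mB j - 1) {1..J}" and ?MA = "multinomial (J - 1) (\<lambda>i. mA i - 1) {1..I}"
  have "{F. F \<subseteq> {1..I} \<times> {1..J} \<and> saturated I J F
          \<and> (\<forall>i\<in>{1..I}. margin_A F i = mA i) \<and> (\<forall>j\<in>{1..J}. margin_B F j = mB j)}
        = indep_fractions {1..I} {1..J} mA mB"
    using assms saturated_iff_margin_independent[of _ I J] card_eq_sum_margin_A[of "{1..I}" "{1..J}"]
    by (auto simp: indep_fractions_def)
  moreover have "?N * (?P * ?Q) = ?MB * ?MA * (?P * ?Q)"
  proof -
    have "admissible_margins {1..I} {1..J} mA mB"
      using assms by (simp add: admissible_margins_def)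
    then have "?N * (?P * ?Q) = fact (I - 1) * fact (J - 1)"
      using card_indep_fractions by (fastforce simp: mult.assoc)
    also have "fact (J - 1) = ?MA * ?P"
      using assms sum_minus_one_eq[of "{1..I}" mA] by (intro multinomial_mult_prod_fact[symmetric]) simp_all
    also have "fact (I - 1) = ?MB * ?Q"
      using assms sum_minus_one_eq[of "{1..J}" mB] by (intro multinomial_mult_prod_fact[symmetric]) simp_all
    finally show ?thesis by (simp add: mult_ac)
  qed
  moreover have "?P * ?Q > 0" by (simp add: prod_pos)
  ultimately show ?thesis by simp
qed

end
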